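(* Let $m\ge 2$ and let $H=\{0,h_1,\dots,h_{m-1}\}$ be a set of $m$ integers in which all the distances $h_1,\dots,h_{m-1}$ are even. Let $D=\gcd(h_1,\dots,h_{m-1})$ and let $c$ be a natural number all of whose prime divisors divide $D$. Put $c\cdot H=\{0,ch_1,\dots,ch_{m-1}\}$. Then $$\mathfrak{S}(c\cdot H)=\mathfrak{S}(H).$$
   Context: For a finite set $H$ of $m$ integers, $\nu_p(H)$ denotes the number of distinct residues modulo $p$ among the elements of $H$. The Selberg (singular series) constant is $$\mathfrak{S}(H)=\prod_{p}\Big(1-\frac{\nu_p(H)}{p}\Big)\Big(1-\frac1p\Big)^{-m},$$ where the product runs over all primes $p$. *)

theory Defs
  imports "HOL-Analysis.Analysis" "HOL-Computational_Algebra.Primes"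
begin

definition nu :: "nat \<Rightarrow> int set \<Rightarrow> nat" where
  "nu p H = card ((\<lambda>h. h mod int p) ` H)"

definition sing_factor :: "nat \<Rightarrow> int set \<Rightarrow> real" where
  "sing_factor p H = (1 - real (nu p H) / real p) * (1 - 1 / real p) powi (- int (card H))"

definition singular_series :: "int set \<Rightarrow> real" where
  "singular_series H = lim (\<lambda>N. \<Prod>p\<in>{p. prime p \<and> p \<le> N}. sing_factor p H)"

end

theory Submission
  imports Defs "HOL-Number_Theory.Number_Theory"
begin

text \<open>Fix a prime p. If p does not divide c, multiplication by c permutes the residues
  modulo p, so H and c H occupy equally many residue classes. If p divides c, then by
  hypothesis p divides every element of H, and both H and c H lie in the single class 0.
  Together with card (c H) = card H this makes every local factor, hence every partial
  product, of the two singular series equal.\<close>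

lemma nu_scale_coprime:
  fixes c :: int
  assumes "coprime c (int p)"
  shows "nu p ((\<lambda>h. c * h) ` H) = nu p H"
proof -
  define g where "g r = (c * r) mod int p" for r
  have image_eq: "(\<lambda>h. h mod int p) ` (\<lambda>h. c * h) ` H = g ` ((\<lambda>h. h mod int p) ` H)"
    unfolding g_def by (auto simp: image_iff mod_mult_right_eq)
  have "inj_on g ((\<lambda>h. h mod int p) ` H)"
  proof (rule inj_onI)
    fix x y
    assume x: "x \<in> (\<lambda>h. h mod int p) ` H" and y: "y \<in> (\<lambda>h. h mod int p) ` H"
      and "g x = g y"
    then have "[c * x = c * y] (mod int p)" unfolding g_def cong_def by simp
    then have "[x = y] (mod int p)" using assms cong_mult_lcancel by blast
    moreover have "x mod int p = x" "y mod int p = y" using x y by auto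
    ultimately show "x = y" unfolding cong_def by simp
  qed
  then show ?thesis unfolding nu_def image_eq by (simp add: card_image)
qed

lemma nu_scale_of_dvd_all:
  assumes "\<forall>h\<in>H. int p dvd h"
  shows "nu p ((\<lambda>h. c * h) ` H) = nu p H"
proof -
  have "(\<lambda>h. h mod int p) ` (\<lambda>h. c * h) ` H = (\<lambda>h. h mod int p) ` H"
    using assms by (auto simp: image_iff)
  then show ?thesis unfolding nu_def by simp
qed

lemma nu_scale:
  fixes c :: nat
  assumes "prime p" and "p dvd c \<longrightarrow> (\<forall>h\<in>H. int p dvd h)"
  shows "nu p ((\<lambda>h. int c * h) ` H) = nu p H"
proof (cases "p dvd c")
  case True
  then show ?thesis using assms(2) by (simp add: nu_scale_of_dvd_all)
next
  case False
  then have "coprime (int c) (int p)"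
    using assms(1) by (metis coprime_commute coprime_int_iff prime_imp_coprime)
  then show ?thesis by (rule nu_scale_coprime)
qed

lemma singular_series_scale:
  fixes c :: nat
  assumes "c \<noteq> 0" and "\<forall>p. prime p \<and> p dvd c \<longrightarrow> (\<forall>h\<in>H. int p dvd h)"
  shows "singular_series ((\<lambda>h. int c * h) ` H) = singular_series H"
proof -
  have "card ((\<lambda>h. int c * h) ` H) = card H"
    using assms(1) by (intro card_image inj_onI) auto
  then have factor_eq: "sing_factor p ((\<lambda>h. int c * h) ` H) = sing_factor p H"
    if "prime p" for p
    unfolding sing_factor_def using nu_scale[OF that] assms(2) that by simp
  have "(\<Prod>p\<in>{p. prime p \<and> p \<le> N}. sing_factor p ((\<lambda>h. int c * h) ` H))
      = (\<Prod>p\<in>{p. prime p \<and> p \<le> N}. sing_factor p H)" for N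
    by (rule prod.cong) (auto simp: factor_eq)
  then show ?thesis unfolding singular_series_def by simp
qed

theorem mainTheorem1:
  fixes H :: "int set" and m c :: nat
  assumes "finite H" and "card H = m" and "m \<ge> 2" and "0 \<in> H"
    and "\<forall>h\<in>H. even h"
    and "c \<ge> 1"
    and "\<forall>p::nat. prime p \<and> p dvd c \<longrightarrow> int p dvd Gcd (H - {0})"
  shows "singular_series ((\<lambda>h. int c * h) ` H) = singular_series H"
proof (rule singular_series_scale)
  show "c \<noteq> 0" using assms(6) by simp
  have "int p dvd h" if "int p dvd Gcd (H - {0})" and "h \<in> H" for p h
    using that by (cases "h = 0") (auto intro: dvd_trans Gcd_dvd)
  then show "\<forall>p. prime p \<and> p dvd c \<longrightarrow> (\<forall>h\<in>H. int p dvd h)"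
    using assms(7) by blast
qed

end
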